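(* Let $N=2n$, and let $B_1,B_2$ be finite tensor products of crystals of the forms $B^{t}$ and $B^{s\vee}$ ($s,t\ge1$) of type $A^{(1)}_{N-1}$. For $b_i\in B_i$, if $R_{B_2,B_1}(b_2\otimes b_1)=b_1'\otimes b_2'$, then $R_{\mathrm{rev}(B_1),\mathrm{rev}(B_2)}(b_1^*\otimes b_2^* )=b_2'^*\otimes b_1'^*$.
   Context: $B^1$ is the $U_q'(A^{(1)}_{N-1})$-crystal with elements $1,\dots,N$, $f_i(i)=i+1$ for $1\le i\le N-1$, $f_0(N)=1$ (all other $f_i$ zero). $B^t$ ($=B^{1,t}$) is the Kirillov–Reshetikhin crystal whose elements are weakly increasing words $b_t\cdots b_1$ of length $t$ in $1<\dots<N$; $B^{s\vee}$ is its contragredient dual (elements $b^\vee$, $f_i(b^\vee)=e_i(b)^\vee$); $B^{1\vee}$ has elements $j^\vee$, viewed as totally ordered $N^\vee<\dots<1^\vee$, and elements of $B^{s\vee}$ are weakly increasing words in this order. Tensor product convention: $f_i(b_2\otimes b_1)=f_i(b_2)\otimes b_1$ if $\varepsilon_i(b_2)\ge\varphi_i(b_1)$ and $b_2\otimes f_i(b_1)$ otherwise. The involution $*$: on letters $j^*=N+1-j$ and $(j^\vee)^*=(N+1-j)^\vee$; on a word (element of $B^t$ or $B^{s\vee}$) $(x_m\cdots x_1)^*=x_1^*\cdots x_m^*$; on tensor products $(x_m\otimes\cdots\otimes x_1)^*=x_1^*\otimes\cdots\otimes x_m^*$. For a tensor product $B=X_m\otimes\cdots\otimes X_1$, $\mathrm{rev}(B)=X_1\otimes\cdots\otimes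 X_m$, so $*:B\to\mathrm{rev}(B)$. For tensor products $X,Y$ of such crystals, $R_{X,Y}:X\otimes Y\to Y\otimes X$ is the unique crystal isomorphism (combinatorial $R$-matrix). *)

theory Defs
  imports Main
begin

text \<open>Letters are naturals 1..N, Dirac indices i in {0..<N}.
A factor is either B^t (Sym t) or the dual B^(s vee) (Dual s).
An element of Sym t is the word b_t...b_1 stored as the list [b_t,...,b_1] (weakly increasing).
An element of Dual s is the word x_s...x_1 of dual letters j^vee, stored as the list of the
underlying j's in written order; weakly increasing in the dual order means numerically
weakly decreasing. Its underlying element b of B^s is the reversed (ascending) list.\<close>

datatype kind = Sym nat | Dual nat

definition kind_ok :: "kind \<Rightarrow> bool" where
  "kind_ok k = (case k of Sym t \<Rightarrow> t \<ge> 1 | Dual s \<Rightarrow> s \<ge> 1)"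

fun elemsK :: "nat \<Rightarrow> kind \<Rightarrow> nat list set" where
  "elemsK N (Sym t) = {w. length w = t \<and> sorted w \<and> set w \<subseteq> {1..N}}"
| "elemsK N (Dual s) = {w. length w = s \<and> sorted (rev w) \<and> set w \<subseteq> {1..N}}"

text \<open>Tensor product X_m \<otimes> ... \<otimes> X_1 is the kind list [X_m,...,X_1];
its elements are lists [x_m,...,x_1].\<close>
definition elemsT :: "nat \<Rightarrow> kind list \<Rightarrow> nat list list set" where
  "elemsT N ks = {xs. list_all2 (\<lambda>k x. x \<in> elemsK N k) ks xs}"

definition epsS :: "nat \<Rightarrow> nat \<Rightarrow> nat list \<Rightarrow> nat" where
  "epsS N i w = (if i = 0 then count_list w 1 else count_list w (i+1))"

definition phiS :: "nat \<Rightarrow> nat \<Rightarrow> nat list \<Rightarrow> nat" where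
  "phiS N i w = (if i = 0 then count_list w N else count_list w i)"

definition fS :: "nat \<Rightarrow> nat \<Rightarrow> nat list \<Rightarrow> nat list option" where
  "fS N i w = (if i = 0 then (if N \<in> set w then Some (sort (1 # remove1 N w)) else None)
               else (if i \<in> set w then Some (sort ((i+1) # remove1 i w)) else None))"

definition eS :: "nat \<Rightarrow> nat \<Rightarrow> nat list \<Rightarrow> nat list option" where
  "eS N i w = (if i = 0 then (if 1 \<in> set w then Some (sort (N # remove1 1 w)) else None)
               else (if (i+1) \<in> set w then Some (sort (i # remove1 (i+1) w)) else None))"

text \<open>Factors, with the contragredient dual: f_i(b^vee) = e_i(b)^vee,
eps_i(b^vee) = phi_i(b), phi_i(b^vee) = eps_i(b).\<close>
fun epsK :: "nat \<Rightarrow> kind \<Rightarrow> nat \<Rightarrow> nat list \<Rightarrow> nat" where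
  "epsK N (Sym t) i w = epsS N i w"
| "epsK N (Dual s) i w = phiS N i (rev w)"

fun phiK :: "nat \<Rightarrow> kind \<Rightarrow> nat \<Rightarrow> nat list \<Rightarrow> nat" where
  "phiK N (Sym t) i w = phiS N i w"
| "phiK N (Dual s) i w = epsS N i (rev w)"

fun fK :: "nat \<Rightarrow> kind \<Rightarrow> nat \<Rightarrow> nat list \<Rightarrow> nat list option" where
  "fK N (Sym t) i w = fS N i w"
| "fK N (Dual s) i w = map_option rev (eS N i (rev w))"

text \<open>Tensor products, convention: f_i(b2 \<otimes> b1) = f_i(b2) \<otimes> b1 if eps_i(b2) \<ge> phi_i(b1),
else b2 \<otimes> f_i(b1). Hence eps(b2 \<otimes> b1) = eps(b1) + max(0, eps(b2) - phi(b1)) and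
phi(b2 \<otimes> b1) = phi(b2) + max(0, phi(b1) - eps(b2)). Nat subtraction is truncated.\<close>
fun phiT :: "nat \<Rightarrow> kind list \<Rightarrow> nat \<Rightarrow> nat list list \<Rightarrow> nat" where
  "phiT N (k # ks) i (x # xs) = phiK N k i x + (phiT N ks i xs - epsK N k i x)"
| "phiT N _ i _ = 0"

fun fT :: "nat \<Rightarrow> kind list \<Rightarrow> nat \<Rightarrow> nat list list \<Rightarrow> nat list list option" where
  "fT N (k # ks) i (x # xs) =
     (if epsK N k i x \<ge> phiT N ks i xs
      then map_option (\<lambda>y. y # xs) (fK N k i x)
      else map_option (\<lambda>ys. x # ys) (fT N ks i xs))"
| "fT N _ i _ = None"

text \<open>Crystal isomorphism between tensor products A and B: a bijection of the element
sets commuting with all f_i, i in {0..<N} (hence also with the e_i, their partial inverses).\<close>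
definition crystal_iso :: "nat \<Rightarrow> kind list \<Rightarrow> kind list \<Rightarrow> (nat list list \<Rightarrow> nat list list) \<Rightarrow> bool" where
  "crystal_iso N A B R \<longleftrightarrow> bij_betw R (elemsT N A) (elemsT N B) \<and>
     (\<forall>b \<in> elemsT N A. \<forall>i < N. map_option R (fT N A i b) = fT N B i (R b))"

definition starW :: "nat \<Rightarrow> nat list \<Rightarrow> nat list" where
  "starW N w = rev (map (\<lambda>j. N + 1 - j) w)"

definition starT :: "nat \<Rightarrow> nat list list \<Rightarrow> nat list list" where
  "starT N xs = rev (map (starW N) xs)"

end

theory Submission
  imports Defs "HOL-Library.Multiset"
begin

(* The involution * reverses the order of the tensor factors and reverses arrows while relabelling
   them by the diagram automorphism sigma(0) = 0, sigma(i) = N - i: if f_i b = b' then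
   f_(sigma i) b'* = b*.  Hence b |-> R' b* and b |-> (R b)* both send an f_i-arrow of
   B2 (x) B1 to a reversed f_(sigma i)-arrow of rev(B1) (x) rev(B2), so they coincide as soon as
   they coincide at one element: every element of a tensor product reaches the classical highest
   weight element u along f-arrows.  They do coincide at u.  A crystal isomorphism between tensor
   products of the same factors fixes the lowest weight element v, the unique maximiser of the sum
   of the phi_0 of the factors, and it fixes u, which is reached from v by exactly that many
   f_0-arrows; finally u* = v. *)

lemma sort_replace_cancel:
  assumes "a \<in> set w" and "sorted w"
  shows "sort (a # remove1 b (sort (b # remove1 a w))) = w"
  by (rule properties_for_sort) (use assms in \<open>simp_all add: mset_remove1\<close>)

lemma count_list_sort_replace:
  assumes "a \<in> set w" and "a \<noteq> b"
  shows "count_list (sort (b # remove1 a w)) a = count_list w a - 1"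
    and "count_list (sort (b # remove1 a w)) b = Suc (count_list w b)"
  using assms by (simp_all flip: count_mset add: mset_remove1)

lemma sort_replace_in_range:
  assumes "a \<in> set w" and "set w \<subseteq> {1..N}" and "b \<in> {1..N}"
  shows "length (sort (b # remove1 a w)) = length w"
    and "set (sort (b # remove1 a w)) \<subseteq> {1..N}"
proof -
  show "length (sort (b # remove1 a w)) = length w"
    using assms(1) length_pos_if_in_set[OF assms(1)] by (simp add: length_remove1)
  show "set (sort (b # remove1 a w)) \<subseteq> {1..N}"
    using assms(2,3) set_remove1_subset[of a w] by (simp del: sort_key_simps)
qed

lemma sum_list_map_sort_replace:
  fixes h :: "nat \<Rightarrow> nat"
  assumes "a \<in> set w"
  shows "sum_list (map h (sort (b # remove1 a w))) + h a = sum_list (map h w) + h b"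
proof -
  have "sum_list (map h (sort l)) = sum_list (map h l)" for l
    by (metis mset_map mset_sort sum_mset_sum_list)
  then show ?thesis
    using sum_list_map_remove1[OF assms, of h] by (simp del: sort_key_simps)
qed

lemma count_list_replicate_same [simp]: "count_list (replicate n a) a = n"
  by (induction n) auto

lemma count_list_eq_length_imp_replicate:
  "count_list xs a = length xs \<Longrightarrow> xs = replicate (length xs) a"
proof (induction xs)
  case (Cons x xs)
  then show ?case
    using count_le_length[of xs a] by (auto split: if_splits)
qed simp


section \<open>The arrows of a single factor\<close>

(* The i-arrow of B^1 goes from arrow_src N i to arrow_tgt N i. *)
definition arrow_src :: "nat \<Rightarrow> nat \<Rightarrow> nat" where
  "arrow_src N i = (if i = 0 then N else i)"

definition arrow_tgt :: "nat \<Rightarrow> nat \<Rightarrow> nat" where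
  "arrow_tgt N i = (if i = 0 then 1 else i + 1)"

lemma arrow_src_tgt_in_range:
  assumes "i < N"
  shows "arrow_src N i \<in> {1..N}" and "arrow_tgt N i \<in> {1..N}"
  using assms by (auto simp: arrow_src_def arrow_tgt_def)

lemma arrow_src_neq_tgt: "N \<ge> 2 \<Longrightarrow> arrow_src N i \<noteq> arrow_tgt N i"
  by (simp add: arrow_src_def arrow_tgt_def)

lemma fS_arrow:
  "fS N i w = (if arrow_src N i \<in> set w
     then Some (sort (arrow_tgt N i # remove1 (arrow_src N i) w)) else None)"
  by (simp add: fS_def arrow_src_def arrow_tgt_def)

lemma eS_arrow:
  "eS N i w = (if arrow_tgt N i \<in> set w
     then Some (sort (arrow_src N i # remove1 (arrow_tgt N i) w)) else None)"
  by (simp add: eS_def arrow_src_def arrow_tgt_def)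

lemma phiS_arrow: "phiS N i w = count_list w (arrow_src N i)"
  by (simp add: phiS_def arrow_src_def)

lemma epsS_arrow: "epsS N i w = count_list w (arrow_tgt N i)"
  by (simp add: epsS_def arrow_tgt_def)

lemma fS_eq_Some_iff_eS_eq_Some:
  assumes "sorted x" and "sorted y"
  shows "fS N i x = Some y \<longleftrightarrow> eS N i y = Some x"
  using assms sort_replace_cancel[of "arrow_src N i" x "arrow_tgt N i"]
    sort_replace_cancel[of "arrow_tgt N i" y "arrow_src N i"]
  by (auto simp: fS_arrow eS_arrow simp del: sort_key_simps)

lemma fK_eq_None_iff: "fK N k i x = None \<longleftrightarrow> phiK N k i x = 0"
  by (cases k) (simp_all add: fS_arrow eS_arrow phiS_arrow epsS_arrow count_list_0_iff)

lemma fK_eps_phi: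
  assumes "fK N k i x = Some y" and "N \<ge> 2"
  shows "epsK N k i y = Suc (epsK N k i x)" and "phiK N k i y = phiK N k i x - 1"
proof -
  note ne = arrow_src_neq_tgt[OF assms(2), of i]
  have "epsK N k i y = Suc (epsK N k i x) \<and> phiK N k i y = phiK N k i x - 1"
  proof (cases k)
    case (Sym t)
    then have "arrow_src N i \<in> set x" and "y = sort (arrow_tgt N i # remove1 (arrow_src N i) x)"
      using assms(1) by (simp_all add: fS_arrow split: if_splits)
    then show ?thesis
      using Sym ne by (simp add: phiS_arrow epsS_arrow count_list_sort_replace del: sort_key_simps)
  next
    case (Dual s)
    then have "arrow_tgt N i \<in> set (rev x)"
      and "rev y = sort (arrow_src N i # remove1 (arrow_tgt N i) (rev x))"
      using assms(1) by (auto simp: eS_arrow split: if_splits)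
    then show ?thesis
      using Dual ne count_list_sort_replace[of "arrow_tgt N i" "rev x" "arrow_src N i"]
      by (simp add: phiS_arrow epsS_arrow del: sort_key_simps)
  qed
  then show "epsK N k i y = Suc (epsK N k i x)" and "phiK N k i y = phiK N k i x - 1"
    by simp_all
qed

lemma fK_in_elemsK:
  assumes "fK N k i x = Some y" and "x \<in> elemsK N k" and "i < N"
  shows "y \<in> elemsK N k"
proof (cases k)
  case (Sym t)
  then have src: "arrow_src N i \<in> set x" and y: "y = sort (arrow_tgt N i # remove1 (arrow_src N i) x)"
    using assms(1) by (simp_all add: fS_arrow split: if_splits)
  then have "length y = length x" and "set y \<subseteq> {1..N}"
    using Sym assms(2) sort_replace_in_range[OF src _ arrow_src_tgt_in_range(2)[OF assms(3)]]
    by (simp_all del: sort_key_simps)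
  moreover have "sorted y"
    unfolding y by (rule sorted_sort)
  ultimately show ?thesis
    using Sym assms(2) by simp
next
  case (Dual s)
  then have tgt: "arrow_tgt N i \<in> set (rev x)"
    and y: "rev y = sort (arrow_src N i # remove1 (arrow_tgt N i) (rev x))"
    using assms(1) by (auto simp: eS_arrow split: if_splits)
  then have "length (rev y) = length x" and "set (rev y) \<subseteq> {1..N}"
    using Dual assms(2) sort_replace_in_range[OF tgt _ arrow_src_tgt_in_range(1)[OF assms(3)]]
    by (simp_all del: sort_key_simps)
  moreover have "sorted (rev y)"
    unfolding y by (rule sorted_sort)
  ultimately show ?thesis
    using Dual assms(2) by simp
qed


section \<open>The involution on a single factor\<close>

(* The diagram automorphism i |-> -i mod N, under which * exchanges f_i and e_(star_index N i). *)
definition star_index :: "nat \<Rightarrow> nat \<Rightarrow> nat" where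
  "star_index N i = (if i = 0 then 0 else N - i)"

lemma star_index_less: "i < N \<Longrightarrow> star_index N i < N"
  by (simp add: star_index_def)

lemma arrow_star_index:
  assumes "i < N"
  shows "arrow_src N (star_index N i) = N + 1 - arrow_tgt N i"
    and "arrow_tgt N (star_index N i) = N + 1 - arrow_src N i"
  using assms by (auto simp: star_index_def arrow_src_def arrow_tgt_def)

lemma sorted_starW: "sorted w \<Longrightarrow> sorted (starW N w)"
  by (induction w) (auto simp: starW_def sorted_append)

lemma rev_starW: "rev (starW N w) = starW N (rev w)"
  by (simp add: starW_def rev_map)

lemma starW_in_elemsK:
  assumes "x \<in> elemsK N k"
  shows "starW N x \<in> elemsK N k"
proof -
  have "set x \<subseteq> {1..N}"
    using assms by (cases k) auto
  then have "set (starW N x) \<subseteq> {1..N}"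
    by (auto simp: starW_def subset_iff)
  then show ?thesis
    using assms by (cases k) (auto simp: sorted_starW rev_starW, simp_all add: starW_def)
qed

lemma count_list_starW:
  assumes "set w \<subseteq> {1..N}" and "a \<in> {1..N}"
  shows "count_list (starW N w) (N + 1 - a) = count_list w a"
  using assms by (induction w) (auto simp: starW_def)

lemma starW_sort_replace:
  assumes "a \<in> set w"
  shows "starW N (sort (b # remove1 a w)) = sort ((N + 1 - b) # remove1 (N + 1 - a) (starW N w))"
proof (rule properties_for_sort[symmetric])
  show "sorted (starW N (sort (b # remove1 a w)))"
    by (rule sorted_starW[OF sorted_sort])
  have "N + 1 - a \<in> set (starW N w)"
    using assms by (simp add: starW_def)
  then show "mset (starW N (sort (b # remove1 a w))) = mset ((N + 1 - b) # remove1 (N + 1 - a) (starW N w))"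
    using assms by (simp add: starW_def mset_remove1 image_mset_Diff)
qed

lemma eS_starW_if_fS:
  assumes "fS N i x = Some y" and "i < N"
  shows "eS N (star_index N i) (starW N x) = Some (starW N y)"
proof -
  have src: "arrow_src N i \<in> set x" and y: "y = sort (arrow_tgt N i # remove1 (arrow_src N i) x)"
    using assms(1) by (simp_all add: fS_arrow split: if_splits)
  have "N + 1 - arrow_src N i \<in> set (starW N x)"
    using src by (simp add: starW_def)
  then show ?thesis
    unfolding y starW_sort_replace[OF src]
    by (simp add: eS_arrow arrow_star_index[OF assms(2)] del: sort_key_simps)
qed

lemma fK_starW:
  assumes "fK N k i x = Some y" and "x \<in> elemsK N k" and "i < N"
  shows "fK N k (star_index N i) (starW N y) = Some (starW N x)"
proof -
  have y: "y \<in> elemsK N k"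
    by (rule fK_in_elemsK[OF assms])
  show ?thesis
  proof (cases k)
    case (Sym t)
    then have "eS N (star_index N i) (starW N x) = Some (starW N y)"
      using assms(1) eS_starW_if_fS[OF _ assms(3)] by simp
    then show ?thesis
      using Sym assms(2) y fS_eq_Some_iff_eS_eq_Some by (simp add: sorted_starW)
  next
    case (Dual s)
    then have "fS N i (rev y) = Some (rev x)"
      using assms(1,2) y fS_eq_Some_iff_eS_eq_Some by auto
    then have "eS N (star_index N i) (starW N (rev y)) = Some (starW N (rev x))"
      by (rule eS_starW_if_fS[OF _ assms(3)])
    then show ?thesis
      using Dual by (simp add: rev_starW[symmetric])
  qed
qed

lemma starW_eps_phi:
  assumes "x \<in> elemsK N k" and "i < N"
  shows "epsK N k (star_index N i) (starW N x) = phiK N k i x"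
    and "phiK N k (star_index N i) (starW N x) = epsK N k i x"
proof -
  have "set x \<subseteq> {1..N}"
    using assms(1) by (cases k) auto
  then have "count_list (starW N x) (arrow_tgt N (star_index N i)) = count_list x (arrow_src N i)"
    and "count_list (starW N x) (arrow_src N (star_index N i)) = count_list x (arrow_tgt N i)"
    by (simp_all only: arrow_star_index[OF assms(2)] count_list_starW arrow_src_tgt_in_range[OF assms(2)])
  then show "epsK N k (star_index N i) (starW N x) = phiK N k i x"
    and "phiK N k (star_index N i) (starW N x) = epsK N k i x"
    by (cases k; simp add: phiS_arrow epsS_arrow)+
qed


section \<open>Tensor products\<close>

fun epsT :: "nat \<Rightarrow> kind list \<Rightarrow> nat \<Rightarrow> nat list list \<Rightarrow> nat" where
  "epsT N (k # ks) i (x # xs) = epsT N ks i xs + (epsK N k i x - phiT N ks i xs)"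
| "epsT N _ i _ = 0"

lemma fT_eq_None_iff: "fT N ks i xs = None \<longleftrightarrow> phiT N ks i xs = 0"
  by (induction N ks i xs rule: fT.induct) (auto simp: fK_eq_None_iff)

lemma phiT_epsT_fT_append:
  assumes "length xs = length ks"
  shows "phiT N (ks @ ks') i (xs @ xs') = phiT N ks i xs + (phiT N ks' i xs' - epsT N ks i xs)
    \<and> epsT N (ks @ ks') i (xs @ xs') = epsT N ks' i xs' + (epsT N ks i xs - phiT N ks' i xs')
    \<and> fT N (ks @ ks') i (xs @ xs') =
        (if epsT N ks i xs \<ge> phiT N ks' i xs'
         then map_option (\<lambda>ys. ys @ xs') (fT N ks i xs)
         else map_option (\<lambda>ys'. xs @ ys') (fT N ks' i xs'))"
  using assms
proof (induction ks arbitrary: xs)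
  case Nil
  then show ?case
    using fT_eq_None_iff[of N ks' i xs'] by (cases "fT N ks' i xs'") auto
next
  case (Cons k ks)
  then obtain x xs0 where "xs = x # xs0" and "length xs0 = length ks"
    by (cases xs) auto
  with Cons.IH show ?case
    by (auto simp: option.map_comp o_def)
qed

lemma phiT_snoc:
  "length xs = length ks \<Longrightarrow>
    phiT N (ks @ [k]) i (xs @ [x]) = phiT N ks i xs + (phiK N k i x - epsT N ks i xs)"
  using phiT_epsT_fT_append[of xs ks N "[k]" i "[x]"] by simp

lemma epsT_snoc:
  "length xs = length ks \<Longrightarrow>
    epsT N (ks @ [k]) i (xs @ [x]) = epsK N k i x + (epsT N ks i xs - phiK N k i x)"
  using phiT_epsT_fT_append[of xs ks N "[k]" i "[x]"] by simp

lemma fT_snoc: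
  "length xs = length ks \<Longrightarrow>
    fT N (ks @ [k]) i (xs @ [x]) =
      (if epsT N ks i xs \<ge> phiK N k i x then map_option (\<lambda>ys. ys @ [x]) (fT N ks i xs)
       else map_option (\<lambda>y. xs @ [y]) (fK N k i x))"
  using phiT_epsT_fT_append[of xs ks N "[k]" i "[x]"] by (simp add: option.map_comp o_def)

lemma Cons_in_elemsT_Cons [simp]:
  "x # xs \<in> elemsT N (k # ks) \<longleftrightarrow> x \<in> elemsK N k \<and> xs \<in> elemsT N ks"
  by (simp add: elemsT_def)

lemma in_elemsT_Cons_iff:
  "xs \<in> elemsT N (k # ks) \<longleftrightarrow> (\<exists>x xs'. xs = x # xs' \<and> x \<in> elemsK N k \<and> xs' \<in> elemsT N ks)"
  by (simp add: elemsT_def list_all2_Cons1)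

lemma in_elemsT_Nil_iff [simp]: "xs \<in> elemsT N [] \<longleftrightarrow> xs = []"
  by (simp add: elemsT_def)

lemma length_elemsT: "xs \<in> elemsT N ks \<Longrightarrow> length xs = length ks"
  by (simp add: elemsT_def list_all2_lengthD)

lemma in_elemsT_append_iff:
  "xs \<in> elemsT N (ks @ ks') \<longleftrightarrow> (\<exists>ys ys'. xs = ys @ ys' \<and> ys \<in> elemsT N ks \<and> ys' \<in> elemsT N ks')"
proof
  assume "xs \<in> elemsT N (ks @ ks')"
  then show "\<exists>ys ys'. xs = ys @ ys' \<and> ys \<in> elemsT N ks \<and> ys' \<in> elemsT N ks'"
    by (auto simp: elemsT_def list_all2_append1)
qed (auto simp: elemsT_def intro: list_all2_appendI)

lemma append_in_elemsT_append [simp]: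
  "length xs = length ks \<Longrightarrow> xs @ xs' \<in> elemsT N (ks @ ks') \<longleftrightarrow> xs \<in> elemsT N ks \<and> xs' \<in> elemsT N ks'"
  by (simp add: elemsT_def list_all2_append)

lemma fT_in_elemsT:
  assumes "fT N ks i xs = Some ys" and "xs \<in> elemsT N ks" and "i < N"
  shows "ys \<in> elemsT N ks"
  using assms
  by (induction N ks i xs arbitrary: ys rule: fT.induct) (auto simp: fK_in_elemsK split: if_splits)

lemma phiT_fT:
  assumes "fT N ks i xs = Some ys" and "N \<ge> 2"
  shows "phiT N ks i ys = phiT N ks i xs - 1"
  using assms
  by (induction N ks i xs arbitrary: ys rule: fT.induct) (auto simp: fK_eps_phi split: if_splits)

lemma starT_Cons [simp]: "starT N (x # xs) = starT N xs @ [starW N x]"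
  by (simp add: starT_def)

lemma starT_append: "starT N (xs @ ys) = starT N ys @ starT N xs"
  by (simp add: starT_def)

lemma length_starT [simp]: "length (starT N xs) = length xs"
  by (simp add: starT_def)

lemma starT_in_elemsT: "xs \<in> elemsT N ks \<Longrightarrow> starT N xs \<in> elemsT N (rev ks)"
proof (induction ks arbitrary: xs)
  case (Cons k ks)
  then show ?case
    by (auto simp: in_elemsT_Cons_iff length_elemsT starW_in_elemsK)
qed (simp add: starT_def)

lemma starT_eps_phi:
  assumes "xs \<in> elemsT N ks" and "i < N"
  shows "epsT N (rev ks) (star_index N i) (starT N xs) = phiT N ks i xs"
    and "phiT N (rev ks) (star_index N i) (starT N xs) = epsT N ks i xs"
proof -
  have "epsT N (rev ks) (star_index N i) (starT N xs) = phiT N ks i xs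
    \<and> phiT N (rev ks) (star_index N i) (starT N xs) = epsT N ks i xs"
    using assms(1)
  proof (induction ks arbitrary: xs)
    case (Cons k ks)
    then obtain x xs0 where "xs = x # xs0" and "x \<in> elemsK N k" and "xs0 \<in> elemsT N ks"
      by (auto simp: in_elemsT_Cons_iff)
    with Cons.IH show ?case
      by (simp add: epsT_snoc phiT_snoc length_elemsT starW_eps_phi[OF _ assms(2)])
  qed (simp add: starT_def)
  then show "epsT N (rev ks) (star_index N i) (starT N xs) = phiT N ks i xs"
    and "phiT N (rev ks) (star_index N i) (starT N xs) = epsT N ks i xs"
    by simp_all
qed

lemma fT_starT:
  assumes "fT N ks i xs = Some ys" and "xs \<in> elemsT N ks" and "i < N" and "N \<ge> 2"
  shows "fT N (rev ks) (star_index N i) (starT N ys) = Some (starT N xs)"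
  using assms(1,2)
proof (induction ks arbitrary: xs ys)
  case (Cons k ks)
  then obtain x xs0 where xs: "xs = x # xs0" and x: "x \<in> elemsK N k" and xs0: "xs0 \<in> elemsT N ks"
    by (auto simp: in_elemsT_Cons_iff)
  show ?case
  proof (cases "epsK N k i x \<ge> phiT N ks i xs0")
    case True
    then obtain x' where x': "fK N k i x = Some x'" and ys: "ys = x' # xs0"
      using Cons.prems(1) xs by auto
    have "phiK N k (star_index N i) (starW N x') > epsT N (rev ks) (star_index N i) (starT N xs0)"
      using True fK_eps_phi[OF x' assms(4)] fK_in_elemsK[OF x' x assms(3)] xs0
      by (simp add: starW_eps_phi starT_eps_phi assms(3))
    then show ?thesis
      using xs ys fK_starW[OF x' x assms(3)] xs0 by (simp add: fT_snoc length_elemsT)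
  next
    case False
    then obtain ys0 where ys0: "fT N ks i xs0 = Some ys0" and ys: "ys = x # ys0"
      using Cons.prems(1) xs by auto
    have ys0_elem: "ys0 \<in> elemsT N ks"
      by (rule fT_in_elemsT[OF ys0 xs0 assms(3)])
    have "phiK N k (star_index N i) (starW N x) \<le> epsT N (rev ks) (star_index N i) (starT N ys0)"
      using False phiT_fT[OF ys0 assms(4)] x ys0_elem
      by (simp add: starW_eps_phi starT_eps_phi assms(3))
    then show ?thesis
      using xs ys Cons.IH[OF ys0 xs0] ys0_elem by (simp add: fT_snoc length_elemsT)
  qed
qed simp


section \<open>Connectedness\<close>

(* Classical highest and lowest weight elements, for the arrows i in {1..N-1}. *)
fun hwK :: "nat \<Rightarrow> kind \<Rightarrow> nat list" where
  "hwK N (Sym t) = replicate t 1"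
| "hwK N (Dual s) = replicate s N"

fun lwK :: "nat \<Rightarrow> kind \<Rightarrow> nat list" where
  "lwK N (Sym t) = replicate t N"
| "lwK N (Dual s) = replicate s 1"

definition hwT :: "nat \<Rightarrow> kind list \<Rightarrow> nat list list" where
  "hwT N ks = map (hwK N) ks"

definition lwT :: "nat \<Rightarrow> kind list \<Rightarrow> nat list list" where
  "lwT N ks = map (lwK N) ks"

lemma hwK_in_elemsK: "N \<ge> 1 \<Longrightarrow> hwK N k \<in> elemsK N k"
  by (cases k) auto

lemma lwK_in_elemsK: "N \<ge> 1 \<Longrightarrow> lwK N k \<in> elemsK N k"
  by (cases k) auto

lemma lwT_in_elemsT: "N \<ge> 1 \<Longrightarrow> lwT N ks \<in> elemsT N ks"
  by (induction ks) (auto simp: lwT_def lwK_in_elemsK)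

lemma length_hwT [simp]: "length (hwT N ks) = length ks"
  by (simp add: hwT_def)

lemma length_lwT [simp]: "length (lwT N ks) = length ks"
  by (simp add: lwT_def)

lemma hwT_snoc: "hwT N (ks @ [k]) = hwT N ks @ [hwK N k]"
  by (simp add: hwT_def)

lemma lwT_snoc: "lwT N (ks @ [k]) = lwT N ks @ [lwK N k]"
  by (simp add: lwT_def)

lemma starT_hwT: "starT N (hwT N ks) = lwT N (rev ks)"
proof -
  have "starW N (hwK N k) = lwK N k" for k
    by (cases k) (simp_all add: starW_def)
  then show ?thesis
    by (simp add: starT_def hwT_def lwT_def rev_map o_def)
qed

lemma hwK_lwK_eps_phi:
  assumes "N \<ge> 2"
  shows "0 < i \<Longrightarrow> i < N \<Longrightarrow> epsK N k i (hwK N k) = 0"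
    and "0 < i \<Longrightarrow> i < N \<Longrightarrow> phiK N k i (lwK N k) = 0"
    and "epsK N k 0 (lwK N k) = 0"
    and "phiK N k 0 (hwK N k) = 0"
  using assms by (cases k; simp add: epsS_def phiS_def)+

lemma hwT_lwT_eps_phi:
  assumes "N \<ge> 2"
  shows "0 < i \<Longrightarrow> i < N \<Longrightarrow> epsT N ks i (hwT N ks) = 0"
    and "0 < i \<Longrightarrow> i < N \<Longrightarrow> phiT N ks i (lwT N ks) = 0"
    and "epsT N ks 0 (lwT N ks) = 0"
    and "phiT N ks 0 (hwT N ks) = 0"
  using assms by (induction ks) (simp_all add: hwT_def lwT_def hwK_lwK_eps_phi)

definition fK_step :: "nat \<Rightarrow> kind \<Rightarrow> nat set \<Rightarrow> nat list \<Rightarrow> nat list \<Rightarrow> bool" where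
  "fK_step N k I x y \<longleftrightarrow> (\<exists>i\<in>I. fK N k i x = Some y)"

definition fT_step :: "nat \<Rightarrow> kind list \<Rightarrow> nat set \<Rightarrow> nat list list \<Rightarrow> nat list list \<Rightarrow> bool" where
  "fT_step N ks I xs ys \<longleftrightarrow> (\<exists>i\<in>I. fT N ks i xs = Some ys)"

lemma fT_step_rtranclp_mono:
  assumes "I \<subseteq> J" and "(fT_step N ks I)\<^sup>*\<^sup>* xs ys"
  shows "(fT_step N ks J)\<^sup>*\<^sup>* xs ys"
proof -
  have "fT_step N ks I \<le> fT_step N ks J"
    using assms(1) unfolding le_fun_def le_bool_def fT_step_def by blast
  with assms(2) show ?thesis
    using rtranclp_mono by blast
qed

lemma fT_step_rtranclp_length:
  "(fT_step N ks I)\<^sup>*\<^sup>* xs ys \<Longrightarrow> length ys = length xs"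
proof (induction rule: rtranclp_induct)
  case (step ys zs)
  have "fT N ks i ys = Some zs \<Longrightarrow> length zs = length ys" for i
    by (induction N ks i ys arbitrary: zs rule: fT.induct) (auto split: if_splits)
  with step show ?case
    by (auto simp: fT_step_def)
qed simp

lemma fT_step_snoc_right:
  assumes "(fK_step N k I)\<^sup>*\<^sup>* x x'" and "length xs = length ks"
    and "\<forall>i\<in>I. epsT N ks i xs = 0"
  shows "(fT_step N (ks @ [k]) I)\<^sup>*\<^sup>* (xs @ [x]) (xs @ [x'])"
  using assms(1)
proof (induction rule: rtranclp_induct)
  case (step y z)
  then obtain i where "i \<in> I" and "fK N k i y = Some z"
    by (auto simp: fK_step_def)
  then have "fT_step N (ks @ [k]) I (xs @ [y]) (xs @ [z])"
    using assms(2,3) fK_eq_None_iff[of N k i y] by (force simp: fT_step_def fT_snoc)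
  with step.IH show ?case
    by simp
qed simp

lemma fT_step_snoc_left:
  assumes "(fT_step N ks I)\<^sup>*\<^sup>* xs xs'" and "length xs = length ks"
    and "\<forall>i\<in>I. phiK N k i x = 0"
  shows "(fT_step N (ks @ [k]) I)\<^sup>*\<^sup>* (xs @ [x]) (xs' @ [x])"
  using assms(1)
proof (induction rule: rtranclp_induct)
  case (step ys zs)
  then obtain i where "i \<in> I" and "fT N ks i ys = Some zs"
    by (auto simp: fT_step_def)
  moreover have "length ys = length ks"
    using fT_step_rtranclp_length[OF step.hyps(1)] assms(2) by simp
  ultimately have "fT_step N (ks @ [k]) I (ys @ [x]) (zs @ [x])"
    using assms(3) by (auto simp: fT_step_def fT_snoc)
  with step.IH show ?case
    by simp
qed simp

lemma fT_snoc_reaches_fT: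
  assumes "fT N ks i xs = Some xs'" and "length xs = length ks"
    and "x \<in> elemsK N k" and "i < N" and "N \<ge> 2"
  shows "\<exists>x'\<in>elemsK N k. (fT_step N (ks @ [k]) {i})\<^sup>*\<^sup>* (xs @ [x]) (xs' @ [x'])"
  using assms(3)
proof (induction "phiK N k i x" arbitrary: x rule: less_induct)
  case less
  show ?case
  proof (cases "epsT N ks i xs \<ge> phiK N k i x")
    case True
    then have "fT_step N (ks @ [k]) {i} (xs @ [x]) (xs' @ [x])"
      using assms(1,2) by (simp add: fT_step_def fT_snoc)
    with less.prems show ?thesis
      by blast
  next
    case False
    then obtain y where y: "fK N k i x = Some y"
      using fK_eq_None_iff[of N k i x] by fastforce
    then have step: "fT_step N (ks @ [k]) {i} (xs @ [x]) (xs @ [y])"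
      using False assms(2) by (simp add: fT_step_def fT_snoc)
    have "phiK N k i y < phiK N k i x"
      using False fK_eps_phi(2)[OF y assms(5)] by simp
    with less.hyps fK_in_elemsK[OF y less.prems assms(4)]
    obtain x' where "x' \<in> elemsK N k" and "(fT_step N (ks @ [k]) {i})\<^sup>*\<^sup>* (xs @ [y]) (xs' @ [x'])"
      by blast
    with step show ?thesis
      by (meson converse_rtranclp_into_rtranclp)
  qed
qed

lemma fT_step_snoc_left_reaches:
  assumes "(fT_step N ks I)\<^sup>*\<^sup>* xs xs'" and "length xs = length ks"
    and "I \<subseteq> {..<N}" and "N \<ge> 2" and "x \<in> elemsK N k"
  shows "\<exists>x'\<in>elemsK N k. (fT_step N (ks @ [k]) I)\<^sup>*\<^sup>* (xs @ [x]) (xs' @ [x'])"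
  using assms(1)
proof (induction rule: rtranclp_induct)
  case base
  with assms(5) show ?case
    by blast
next
  case (step ys zs)
  then obtain y where y: "y \<in> elemsK N k" and path: "(fT_step N (ks @ [k]) I)\<^sup>*\<^sup>* (xs @ [x]) (ys @ [y])"
    by blast
  obtain i where i: "i \<in> I" and f: "fT N ks i ys = Some zs"
    using step.hyps(2) by (auto simp: fT_step_def)
  have "length ys = length ks"
    using fT_step_rtranclp_length[OF step.hyps(1)] assms(2) by simp
  with fT_snoc_reaches_fT[OF f _ y _ assms(4)] i assms(3)
  obtain z where "z \<in> elemsK N k" and "(fT_step N (ks @ [k]) {i})\<^sup>*\<^sup>* (ys @ [y]) (zs @ [z])"
    by blast
  moreover have "{i} \<subseteq> I"
    using i by simp
  ultimately show ?case
    using path fT_step_rtranclp_mono by (meson rtranclp_trans)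
qed

lemma fK_step_Sym_reaches_lwK:
  assumes "x \<in> elemsK N (Sym t)"
  shows "(fK_step N (Sym t) {0<..<N})\<^sup>*\<^sup>* x (lwK N (Sym t))"
  using assms
proof (induction "sum_list (map (\<lambda>a. N - a) x)" arbitrary: x rule: less_induct)
  case less
  show ?case
  proof (cases "set x \<subseteq> {N}")
    case True
    then have "\<forall>a\<in>set x. a = N"
      by blast
    then show ?thesis
      using less.prems replicate_length_same[of x N] by simp
  next
    case False
    then obtain a where a: "a \<in> set x" "a \<noteq> N"
      by auto
    then have a_range: "0 < a" "a < N"
      using less.prems by auto
    define y where "y = sort ((a + 1) # remove1 a x)"
    have f: "fK N (Sym t) a x = Some y"
      using a a_range by (simp add: fS_arrow arrow_src_def arrow_tgt_def y_def del: sort_key_simps)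
    have "sum_list (map (\<lambda>a. N - a) y) < sum_list (map (\<lambda>a. N - a) x)"
      using sum_list_map_sort_replace[OF a(1), of "\<lambda>a. N - a" "a + 1"] a_range
      by (simp add: y_def del: sort_key_simps)
    with less.hyps fK_in_elemsK[OF f less.prems a_range(2)]
    have "(fK_step N (Sym t) {0<..<N})\<^sup>*\<^sup>* y (lwK N (Sym t))"
      by blast
    moreover have "fK_step N (Sym t) {0<..<N} x y"
      using f a_range by (auto simp: fK_step_def)
    ultimately show ?thesis
      by (meson converse_rtranclp_into_rtranclp)
  qed
qed

lemma fK_step_Dual_reaches_lwK:
  assumes "x \<in> elemsK N (Dual s)"
  shows "(fK_step N (Dual s) {0<..<N})\<^sup>*\<^sup>* x (lwK N (Dual s))"
  using assms
proof (induction "sum_list (map (\<lambda>a. a - 1) x)" arbitrary: x rule: less_induct)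
  case less
  show ?case
  proof (cases "set x \<subseteq> {1}")
    case True
    then have "\<forall>a\<in>set x. a = 1"
      by blast
    then show ?thesis
      using less.prems replicate_length_same[of x 1] by simp
  next
    case False
    then obtain a where a: "a \<in> set (rev x)" "a \<noteq> 1"
      by auto
    then have a_range: "0 < a - 1" "a - 1 < N"
      using less.prems by (force simp: subset_iff)+
    define y where "y = rev (sort ((a - 1) # remove1 a (rev x)))"
    have f: "fK N (Dual s) (a - 1) x = Some y"
      using a a_range by (simp add: eS_arrow arrow_src_def arrow_tgt_def y_def del: sort_key_simps)
    have "sum_list (map (\<lambda>a. a - 1) y) < sum_list (map (\<lambda>a. a - 1) x)"
      using sum_list_map_sort_replace[OF a(1), of "\<lambda>a. a - 1" "a - 1"] a_range
      by (simp add: y_def rev_map[symmetric] sum_list_rev del: sort_key_simps)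
    with less.hyps fK_in_elemsK[OF f less.prems a_range(2)]
    have "(fK_step N (Dual s) {0<..<N})\<^sup>*\<^sup>* y (lwK N (Dual s))"
      by blast
    moreover have "fK_step N (Dual s) {0<..<N} x y"
      using f a_range by (auto simp: fK_step_def)
    ultimately show ?thesis
      by (meson converse_rtranclp_into_rtranclp)
  qed
qed

lemma fK_step_reaches_lwK:
  "x \<in> elemsK N k \<Longrightarrow> (fK_step N k {0<..<N})\<^sup>*\<^sup>* x (lwK N k)"
  by (cases k) (simp_all only: fK_step_Sym_reaches_lwK fK_step_Dual_reaches_lwK)

lemma fK0_step_Sym_reaches_replicate_1:
  assumes "set x \<subseteq> {1, N}" and "N \<ge> 2"
  shows "(fK_step N (Sym t) {0})\<^sup>*\<^sup>* x (replicate (length x) 1)"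
  using assms(1)
proof (induction "count_list x N" arbitrary: x rule: less_induct)
  case less
  show ?case
  proof (cases "N \<in> set x")
    case False
    with less.prems have "\<forall>a\<in>set x. a = 1"
      by blast
    then show ?thesis
      using replicate_length_same[of x 1] by simp
  next
    case True
    define y where "y = sort (1 # remove1 N x)"
    have f: "fK N (Sym t) 0 x = Some y"
      using True by (simp add: fS_arrow arrow_src_def arrow_tgt_def y_def del: sort_key_simps)
    have "set y \<subseteq> {1, N}"
      using less.prems set_remove1_subset[of N x] by (auto simp: y_def simp del: sort_key_simps)
    moreover have "count_list y N < count_list x N"
      using True assms(2) count_list_sort_replace(1)[OF True, of 1] count_list_0_iff[of x N]
      by (simp add: y_def del: sort_key_simps)
    moreover have "length y = length x"
      using True length_pos_if_in_set[OF True] by (simp add: y_def length_remove1 del: sort_key_simps)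
    ultimately have "(fK_step N (Sym t) {0})\<^sup>*\<^sup>* y (replicate (length x) 1)"
      using less.hyps by metis
    moreover have "fK_step N (Sym t) {0} x y"
      using f by (simp add: fK_step_def)
    ultimately show ?thesis
      by (meson converse_rtranclp_into_rtranclp)
  qed
qed

lemma fK0_step_Dual_reaches_replicate_N:
  assumes "set x \<subseteq> {1, N}" and "N \<ge> 2"
  shows "(fK_step N (Dual s) {0})\<^sup>*\<^sup>* x (replicate (length x) N)"
  using assms(1)
proof (induction "count_list x 1" arbitrary: x rule: less_induct)
  case less
  show ?case
  proof (cases "1 \<in> set x")
    case False
    with less.prems have "\<forall>a\<in>set x. a = N"
      by blast
    then show ?thesis
      using replicate_length_same[of x N] by simp
  next
    case True
    then have one: "1 \<in> set (rev x)"
      by simp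
    define y where "y = rev (sort (N # remove1 1 (rev x)))"
    have f: "fK N (Dual s) 0 x = Some y"
      using one by (simp add: eS_arrow arrow_src_def arrow_tgt_def y_def del: sort_key_simps)
    have "set y \<subseteq> {1, N}"
      using less.prems set_remove1_subset[of 1 "rev x"] by (auto simp: y_def simp del: sort_key_simps)
    moreover have "count_list y 1 < count_list x 1"
      using True assms(2) count_list_sort_replace(1)[OF one, of N] count_list_0_iff[of x 1]
      by (simp add: y_def del: sort_key_simps)
    moreover have "length y = length x"
      using one length_pos_if_in_set[OF True] by (simp add: y_def length_remove1 del: sort_key_simps)
    ultimately have "(fK_step N (Dual s) {0})\<^sup>*\<^sup>* y (replicate (length x) N)"
      using less.hyps by metis
    moreover have "fK_step N (Dual s) {0} x y"
      using f by (simp add: fK_step_def)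
    ultimately show ?thesis
      by (meson converse_rtranclp_into_rtranclp)
  qed
qed

lemma fK0_step_lwK_reaches_hwK:
  assumes "N \<ge> 2"
  shows "(fK_step N k {0})\<^sup>*\<^sup>* (lwK N k) (hwK N k)"
proof (cases k)
  case (Sym t)
  then show ?thesis
    using fK0_step_Sym_reaches_replicate_1[OF _ assms, of "replicate t N" t]
    by (simp add: set_replicate_conv_if)
next
  case (Dual s)
  then show ?thesis
    using fK0_step_Dual_reaches_replicate_N[OF _ assms, of "replicate s 1" s]
    by (simp add: set_replicate_conv_if)
qed

lemma fT_step_hwT_reaches_lwT:
  assumes "N \<ge> 2"
  shows "(fT_step N ks {0<..<N})\<^sup>*\<^sup>* (hwT N ks) (lwT N ks)"
proof (induction ks rule: rev_induct)
  case (snoc k ks)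
  have "(fT_step N (ks @ [k]) {0<..<N})\<^sup>*\<^sup>* (hwT N ks @ [hwK N k]) (hwT N ks @ [lwK N k])"
    using fK_step_reaches_lwK[OF hwK_in_elemsK] assms
    by (intro fT_step_snoc_right) (simp_all add: hwT_lwT_eps_phi)
  moreover have "(fT_step N (ks @ [k]) {0<..<N})\<^sup>*\<^sup>* (hwT N ks @ [lwK N k]) (lwT N ks @ [lwK N k])"
    using snoc.IH assms by (intro fT_step_snoc_left) (simp_all add: hwK_lwK_eps_phi)
  ultimately show ?case
    by (simp add: hwT_snoc lwT_snoc)
qed (simp add: hwT_def lwT_def)

lemma fT0_step_lwT_reaches_hwT:
  assumes "N \<ge> 2"
  shows "(fT_step N ks {0})\<^sup>*\<^sup>* (lwT N ks) (hwT N ks)"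
proof (induction ks rule: rev_induct)
  case (snoc k ks)
  have "(fT_step N (ks @ [k]) {0})\<^sup>*\<^sup>* (lwT N ks @ [lwK N k]) (lwT N ks @ [hwK N k])"
    using fK0_step_lwK_reaches_hwK assms
    by (intro fT_step_snoc_right) (simp_all add: hwT_lwT_eps_phi)
  moreover have "(fT_step N (ks @ [k]) {0})\<^sup>*\<^sup>* (lwT N ks @ [hwK N k]) (hwT N ks @ [hwK N k])"
    using snoc.IH assms by (intro fT_step_snoc_left) (simp_all add: hwK_lwK_eps_phi)
  ultimately show ?case
    by (simp add: hwT_snoc lwT_snoc)
qed (simp add: hwT_def lwT_def)

lemma fT_step_reaches_hwT:
  assumes "xs \<in> elemsT N ks" and "N \<ge> 2"
  shows "(fT_step N ks {..<N})\<^sup>*\<^sup>* xs (hwT N ks)"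
  using assms(1)
proof (induction ks arbitrary: xs rule: rev_induct)
  case (snoc k ks)
  then obtain ys x where xs: "xs = ys @ [x]" and ys: "ys \<in> elemsT N ks" and x: "x \<in> elemsK N k"
    by (auto simp: in_elemsT_append_iff in_elemsT_Cons_iff)
  obtain x' where x': "x' \<in> elemsK N k"
    and "(fT_step N (ks @ [k]) {..<N})\<^sup>*\<^sup>* (ys @ [x]) (hwT N ks @ [x'])"
    using fT_step_snoc_left_reaches[OF snoc.IH[OF ys] length_elemsT[OF ys] _ assms(2) x] by auto
  moreover have "(fT_step N (ks @ [k]) {0<..<N})\<^sup>*\<^sup>* (hwT N ks @ [x']) (hwT N ks @ [lwK N k])"
    using fK_step_reaches_lwK[OF x'] assms(2)
    by (intro fT_step_snoc_right) (simp_all add: hwT_lwT_eps_phi)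
  moreover have "(fT_step N (ks @ [k]) {0<..<N})\<^sup>*\<^sup>* (hwT N ks @ [lwK N k]) (lwT N (ks @ [k]))"
    using fT_step_hwT_reaches_lwT[OF assms(2)] assms(2)
    by (simp add: lwT_snoc fT_step_snoc_left hwK_lwK_eps_phi)
  moreover have "(fT_step N (ks @ [k]) {0})\<^sup>*\<^sup>* (lwT N (ks @ [k])) (hwT N (ks @ [k]))"
    by (rule fT0_step_lwT_reaches_hwT[OF assms(2)])
  moreover have "{0<..<N} \<subseteq> {..<N}" and "{0} \<subseteq> {..<N}"
    using assms(2) by auto
  ultimately show ?case
    unfolding xs by (meson fT_step_rtranclp_mono rtranclp_trans)
qed (simp add: hwT_def)


section \<open>Rigidity of crystal isomorphisms\<close>

fun phiK_sum :: "nat \<Rightarrow> kind list \<Rightarrow> nat \<Rightarrow> nat list list \<Rightarrow> nat" where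
  "phiK_sum N (k # ks) i (x # xs) = phiK N k i x + phiK_sum N ks i xs"
| "phiK_sum N _ _ _ = 0"

lemma phiK_sum_fT:
  "fT N ks i xs = Some ys \<Longrightarrow> N \<ge> 2 \<Longrightarrow> phiK_sum N ks i xs = Suc (phiK_sum N ks i ys)"
proof (induction N ks i xs arbitrary: ys rule: fT.induct)
  case (1 N k ks i x xs)
  then show ?case
    using fK_eps_phi(2)[of N k i x] fK_eq_None_iff[of N k i x]
    by (auto split: if_splits)
qed auto

lemma phiK_sum_relpowp:
  assumes "(fT_step N ks {i} ^^ n) xs ys" and "N \<ge> 2"
  shows "phiK_sum N ks i xs = phiK_sum N ks i ys + n"
  using assms(1)
proof (induction n arbitrary: xs)
  case (Suc n)
  then obtain zs where "fT_step N ks {i} xs zs" and "(fT_step N ks {i} ^^ n) zs ys"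
    using relpowp_Suc_D2 by metis
  then have "fT N ks i xs = Some zs" and "phiK_sum N ks i zs = phiK_sum N ks i ys + n"
    using Suc.IH by (simp add: fT_step_def, blast)
  then show ?case
    using phiK_sum_fT[OF _ assms(2)] by simp
qed simp

lemma fT_step_relpowp_functional:
  assumes "(fT_step N ks {i} ^^ n) xs ys" and "(fT_step N ks {i} ^^ n) xs zs"
  shows "ys = zs"
  using assms
proof (induction n arbitrary: xs)
  case (Suc n)
  obtain ys' where "fT_step N ks {i} xs ys'" and ys': "(fT_step N ks {i} ^^ n) ys' ys"
    using relpowp_Suc_D2[OF Suc.prems(1)] by blast
  moreover obtain zs' where "fT_step N ks {i} xs zs'" and zs': "(fT_step N ks {i} ^^ n) zs' zs"
    using relpowp_Suc_D2[OF Suc.prems(2)] by blast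
  ultimately have "ys' = zs'"
    by (simp add: fT_step_def)
  with Suc.IH ys' zs' show ?case
    by blast
qed simp

lemma phiK0_le_lwK:
  assumes "x \<in> elemsK N k"
  shows "phiK N k 0 x \<le> phiK N k 0 (lwK N k)"
    and "phiK N k 0 x = phiK N k 0 (lwK N k) \<Longrightarrow> x = lwK N k"
proof -
  obtain a where phi: "phiK N k 0 x = count_list x a" and lw: "lwK N k = replicate (length x) a"
    and phi_lw: "phiK N k 0 (lwK N k) = length x"
  proof (cases k)
    case (Sym t)
    with assms that[of N] show ?thesis
      by (simp add: phiS_def)
  next
    case (Dual s)
    with assms that[of 1] show ?thesis
      by (simp add: epsS_def)
  qed
  show "phiK N k 0 x \<le> phiK N k 0 (lwK N k)"
    using phi phi_lw count_le_length[of x a] by simp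
  show "x = lwK N k" if "phiK N k 0 x = phiK N k 0 (lwK N k)"
    using that phi phi_lw lw count_list_eq_length_imp_replicate[of x a] by metis
qed

lemma phiK_sum_le_lwT:
  assumes "xs \<in> elemsT N ks"
  shows "phiK_sum N ks 0 xs \<le> phiK_sum N ks 0 (lwT N ks)"
    and "phiK_sum N ks 0 xs = phiK_sum N ks 0 (lwT N ks) \<Longrightarrow> xs = lwT N ks"
proof -
  have "phiK_sum N ks 0 xs \<le> phiK_sum N ks 0 (lwT N ks)
    \<and> (phiK_sum N ks 0 xs = phiK_sum N ks 0 (lwT N ks) \<longrightarrow> xs = lwT N ks)"
    using assms
  proof (induction ks arbitrary: xs)
    case (Cons k ks)
    then obtain x xs0 where "xs = x # xs0" and "x \<in> elemsK N k" and "xs0 \<in> elemsT N ks"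
      by (auto simp: in_elemsT_Cons_iff)
    with Cons.IH phiK0_le_lwK[of x N k] show ?case
      by (fastforce simp: lwT_def)
  qed (simp add: lwT_def)
  then show "phiK_sum N ks 0 xs \<le> phiK_sum N ks 0 (lwT N ks)"
    and "phiK_sum N ks 0 xs = phiK_sum N ks 0 (lwT N ks) \<Longrightarrow> xs = lwT N ks"
    by simp_all
qed

lemma phiK_sum_lwT_mset_eq:
  assumes "mset A = mset B"
  shows "phiK_sum N A i (lwT N A) = phiK_sum N B i (lwT N B)"
proof -
  have "phiK_sum N ks i (lwT N ks) = sum_list (map (\<lambda>k. phiK N k i (lwK N k)) ks)" for ks
    by (induction ks) (simp_all add: lwT_def)
  with assms show ?thesis
    by (metis mset_map sum_mset_sum_list)
qed

lemma phiK_sum_hwT: "N \<ge> 2 \<Longrightarrow> phiK_sum N ks 0 (hwT N ks) = 0"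
  by (induction ks) (simp_all add: hwT_def hwK_lwK_eps_phi)

lemma crystal_iso_fT:
  assumes "crystal_iso N A B Phi" and "a \<in> elemsT N A" and "i < N" and "fT N A i a = Some b"
  shows "fT N B i (Phi a) = Some (Phi b)"
  using assms unfolding crystal_iso_def by (metis option.simps(9))

lemma crystal_iso_relpowp:
  assumes "crystal_iso N A B Phi" and "i < N"
    and "(fT_step N A {i} ^^ n) a b" and "a \<in> elemsT N A"
  shows "(fT_step N B {i} ^^ n) (Phi a) (Phi b)"
  using assms(3,4)
proof (induction n arbitrary: a)
  case (Suc n)
  obtain c where "fT_step N A {i} a c" and "(fT_step N A {i} ^^ n) c b"
    using relpowp_Suc_D2[OF Suc.prems(1)] by blast
  moreover from this(1) have c: "fT N A i a = Some c"
    by (simp add: fT_step_def)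
  moreover have "c \<in> elemsT N A"
    by (rule fT_in_elemsT[OF c Suc.prems(2) assms(2)])
  ultimately have "(fT_step N B {i} ^^ n) (Phi c) (Phi b)"
    using Suc.IH by blast
  moreover have "fT_step N B {i} (Phi a) (Phi c)"
    using crystal_iso_fT[OF assms(1) Suc.prems(2) assms(2) c] by (simp add: fT_step_def)
  ultimately show ?case
    by (rule relpowp_Suc_I2[rotated])
qed simp

lemma crystal_iso_lwT_hwT:
  assumes iso: "crystal_iso N A B Phi" and perm: "mset A = mset B" and "N \<ge> 2"
  shows "Phi (lwT N A) = lwT N B" and "Phi (hwT N A) = hwT N B"
proof -
  have path: "\<exists>n. (fT_step N ks {0} ^^ n) (lwT N ks) (hwT N ks) \<and> n = phiK_sum N ks 0 (lwT N ks)" for ks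
    using rtranclp_imp_relpowp[OF fT0_step_lwT_reaches_hwT[OF \<open>N \<ge> 2\<close>]]
      phiK_sum_relpowp phiK_sum_hwT \<open>N \<ge> 2\<close> by fastforce
  then obtain n where pathA: "(fT_step N A {0} ^^ n) (lwT N A) (hwT N A)"
    and n: "n = phiK_sum N B 0 (lwT N B)"
    using phiK_sum_lwT_mset_eq[OF perm] by metis
  have lwA: "lwT N A \<in> elemsT N A"
    using \<open>N \<ge> 2\<close> by (simp add: lwT_in_elemsT)
  have pathB: "(fT_step N B {0} ^^ n) (Phi (lwT N A)) (Phi (hwT N A))"
    using crystal_iso_relpowp[OF iso _ pathA lwA] \<open>N \<ge> 2\<close> by simp
  have "Phi (lwT N A) \<in> elemsT N B"
    using iso lwA unfolding crystal_iso_def by (blast dest: bij_betwE)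
  moreover have "phiK_sum N B 0 (Phi (lwT N A)) \<ge> phiK_sum N B 0 (lwT N B)"
    using phiK_sum_relpowp[OF pathB \<open>N \<ge> 2\<close>] n by simp
  ultimately show lw: "Phi (lwT N A) = lwT N B"
    using phiK_sum_le_lwT by (metis le_antisym)
  obtain m where "(fT_step N B {0} ^^ m) (lwT N B) (hwT N B)" and "m = n"
    using path[of B] n by blast
  with pathB show "Phi (hwT N A) = hwT N B"
    unfolding lw by (blast intro: fT_step_relpowp_functional)
qed


section \<open>Combinatorial R-matrices and the involution\<close>

lemma crystal_iso_starT:
  assumes iso: "crystal_iso N C D R" and iso': "crystal_iso N (rev C) (rev D) R'"
    and perm: "mset C = mset D" and "N \<ge> 2" and "b \<in> elemsT N C"
  shows "R' (starT N b) = starT N (R b)"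
proof -
  have hw: "R' (starT N (hwT N C)) = starT N (R (hwT N C))"
    using crystal_iso_lwT_hwT[OF iso perm \<open>N \<ge> 2\<close>] crystal_iso_lwT_hwT[OF iso' _ \<open>N \<ge> 2\<close>] perm
    by (simp add: starT_hwT)
  have "(fT_step N C {..<N})\<^sup>*\<^sup>* b (hwT N C)"
    by (rule fT_step_reaches_hwT[OF assms(5) \<open>N \<ge> 2\<close>])
  then show ?thesis
    using assms(5)
  proof (induction rule: converse_rtranclp_induct)
    case base
    from hw show ?case .
  next
    case (step y z)
    then obtain i where i: "i < N" and f: "fT N C i y = Some z"
      by (auto simp: fT_step_def)
    have z: "z \<in> elemsT N C"
      by (rule fT_in_elemsT[OF f step.prems i])
    have "fT N (rev D) (star_index N i) (R' (starT N z)) = Some (R' (starT N y))"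
      using crystal_iso_fT[OF iso' starT_in_elemsT[OF z] star_index_less[OF i]]
        fT_starT[OF f step.prems i \<open>N \<ge> 2\<close>] .
    moreover have "R y \<in> elemsT N D"
      using iso step.prems unfolding crystal_iso_def by (blast dest: bij_betwE)
    then have "fT N (rev D) (star_index N i) (starT N (R z)) = Some (starT N (R y))"
      using fT_starT[OF crystal_iso_fT[OF iso step.prems i f] _ i \<open>N \<ge> 2\<close>] by blast
    ultimately show ?case
      using step.IH[OF z] by simp
  qed
qed

theorem proposition25:
  fixes N n :: nat and B1 B2 :: "kind list"
    and R R' :: "nat list list \<Rightarrow> nat list list"
    and b1 b2 b1' b2' :: "nat list list"
  assumes "N = 2 * n" and "n \<ge> 1"
    and "\<forall>k \<in> set B1. kind_ok k" and "\<forall>k \<in> set B2. kind_ok k"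
    and "crystal_iso N (B2 @ B1) (B1 @ B2) R"
    and "crystal_iso N (rev B1 @ rev B2) (rev B2 @ rev B1) R'"
    and "b1 \<in> elemsT N B1" and "b2 \<in> elemsT N B2"
    and "b1' \<in> elemsT N B1" and "b2' \<in> elemsT N B2"
    and "R (b2 @ b1) = b1' @ b2'"
  shows "R' (starT N b1 @ starT N b2) = starT N b2' @ starT N b1'"
proof -
  have "crystal_iso N (rev (B2 @ B1)) (rev (B1 @ B2)) R'"
    using assms(6) by simp
  moreover have "mset (B2 @ B1) = mset (B1 @ B2)"
    by (simp add: union_commute)
  \<comment> \<open>only N \<ge> 2 is used, not the parity of N\<close>
  moreover have "N \<ge> 2"
    using assms(1,2) by simp
  moreover have "b2 @ b1 \<in> elemsT N (B2 @ B1)"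
    using assms(7,8) length_elemsT[OF assms(8)] by simp
  ultimately have "R' (starT N (b2 @ b1)) = starT N (R (b2 @ b1))"
    by (rule crystal_iso_starT[OF assms(5)])
  then show ?thesis
    using assms(11) by (simp add: starT_append)
qed

end
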